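(* Let $m,n\ge 2$ and let $G$ be the ordered graph with vertices $v_1<\dots<v_{m+n}$ whose only edges are $v_1v_{m+n}$ and $v_mv_{m+1}$ (two nested edges: one joining the outermost vertices and one joining the innermost vertices of the parts $\{v_1,\dots,v_m\}$ and $\{v_{m+1},\dots,v_{m+n}\}$). Then $R(G)=2m+2n-2$.
   Context: An ordered graph is a graph together with a specified linear ordering of its vertex set. An ordered graph $G$ is contained in an ordered graph $H$ if there is an order-preserving injection $V(G)\to V(H)$ mapping edges to edges. $R(G)$ denotes the 2-color ordered Ramsey number: the minimum $N$ such that every 2-coloring of the edges of the ordered complete graph on $N$ vertices contains a monochromatic copy of $G$. *)

theory Defs
  imports Main
begin

text \<open>A 2-colouring of the ordered complete graph K_N on {..<N} is a function
c :: nat => nat => bool, where c i j (for i < j < N) is the colour of edge ij.\<close>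

definition ordered_graph :: "nat \<Rightarrow> (nat \<times> nat) set \<Rightarrow> bool" where
  "ordered_graph k E \<longleftrightarrow> (\<forall>(i,j)\<in>E. i < j \<and> j < k)"

definition has_mono_copy :: "nat \<Rightarrow> (nat \<times> nat) set \<Rightarrow> nat \<Rightarrow> (nat \<Rightarrow> nat \<Rightarrow> bool) \<Rightarrow> bool" where
  "has_mono_copy k E N c \<longleftrightarrow>
     (\<exists>b f. strict_mono_on {..<k} f \<and> f ` {..<k} \<subseteq> {..<N} \<and>
            (\<forall>(i,j)\<in>E. c (f i) (f j) = b))"

definition ordered_ramsey :: "nat \<Rightarrow> (nat \<times> nat) set \<Rightarrow> nat" where
  "ordered_ramsey k E = (LEAST N. \<forall>c. has_mono_copy k E N c)"

end

theory Submission
  imports Defs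
begin

text \<open>Upper bound: in \<open>K\<^sub>N\<close> with \<open>N = 2m + 2n - 2\<close> consider the three edges \<open>{0, N-1}\<close>,
\<open>{m-1, 2m+n-2}\<close> and \<open>{2m-2, 2m-1}\<close>. Each two of them are nested with at least \<open>m - 2\<close>
vertices strictly between their left ends and at least \<open>n - 2\<close> strictly between their right
ends, so any two of the same colour, which exist by pigeonhole, carry a monochromatic copy.
Lower bound: colour an edge \<open>ij\<close> by whether \<open>j - i \<ge> m + n - 1\<close>. The outer edge of any copy
is long, while a long inner edge forces the copy to span at least \<open>2m + 2n - 3\<close> steps.\<close>

abbreviation nested_edges :: "nat \<Rightarrow> nat \<Rightarrow> (nat \<times> nat) set" where
  "nested_edges m n \<equiv> {(0, m + n - 1), (m - 1, m)}"

lemma strict_mono_on_lessThan_gap: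
  fixes f :: "nat \<Rightarrow> nat"
  assumes "strict_mono_on {..<k} f" "i \<le> j" "j < k"
  shows "f i + (j - i) \<le> f j"
  using assms(2,3)
proof (induction j)
  case 0
  then show ?case by simp
next
  case (Suc j)
  show ?case
  proof (cases "i = Suc j")
    case False
    with Suc have "i \<le> j" and "f i + (j - i) \<le> f j" by simp_all
    moreover have "f j < f (Suc j)"
      using assms(1) Suc.prems by (simp add: strict_mono_on_def)
    ultimately show ?thesis by simp
  qed simp
qed

lemma has_mono_copy_nested_edges:
  assumes "m \<ge> 2" "n \<ge> 2"
    and "a + (m - 1) \<le> x" "x < y" "y + (n - 1) \<le> d" "d < N"
    and "c a d = c x y"
  shows "has_mono_copy (m + n) (nested_edges m n) N c"
proof -
  define f where "f i = (if i < m - 1 then a + i else if i = m - 1 then x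
      else if i = m then y else d - (m + n - 1 - i))" for i
  have "strict_mono_on {..<m + n} f"
    unfolding strict_mono_on_def f_def using assms by auto
  moreover have "f ` {..<m + n} \<subseteq> {..<N}"
    unfolding f_def using assms by auto
  moreover have "f 0 = a" "f (m + n - 1) = d" "f (m - 1) = x" "f m = y"
    unfolding f_def using assms by auto
  ultimately show ?thesis
    unfolding has_mono_copy_def using assms(7) by auto
qed

lemma has_mono_copy_nested_edges_upper:
  assumes "m \<ge> 2" "n \<ge> 2"
  shows "has_mono_copy (m + n) (nested_edges m n) (2*m + 2*n - 2) c"
proof -
  let ?N = "2*m + 2*n - 2"
  have "c 0 (?N - 1) = c (m - 1) (2*m + n - 2) \<or> c 0 (?N - 1) = c (2*m - 2) (2*m - 1)
        \<or> c (m - 1) (2*m + n - 2) = c (2*m - 2) (2*m - 1)"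
    by auto
  then show ?thesis
  proof (elim disjE)
    assume "c 0 (?N - 1) = c (m - 1) (2*m + n - 2)"
    then show ?thesis
      by (rule has_mono_copy_nested_edges[rotated -1]) (use assms in auto)
  next
    assume "c 0 (?N - 1) = c (2*m - 2) (2*m - 1)"
    then show ?thesis
      by (rule has_mono_copy_nested_edges[rotated -1]) (use assms in auto)
  next
    assume "c (m - 1) (2*m + n - 2) = c (2*m - 2) (2*m - 1)"
    then show ?thesis
      by (rule has_mono_copy_nested_edges[rotated -1]) (use assms in auto)
  qed
qed

lemma no_mono_copy_nested_edges_length_colouring:
  assumes "m \<ge> 2" "n \<ge> 2" "N < 2*m + 2*n - 2"
  shows "\<not> has_mono_copy (m + n) (nested_edges m n) N (\<lambda>i j. j - i \<ge> m + n - 1)"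
proof
  assume "has_mono_copy (m + n) (nested_edges m n) N (\<lambda>i j. j - i \<ge> m + n - 1)"
  then obtain b f where mono: "strict_mono_on {..<m + n} f"
    and range: "f ` {..<m + n} \<subseteq> {..<N}"
    and outer: "(f (m + n - 1) - f 0 \<ge> m + n - 1) = b"
    and inner: "(f m - f (m - 1) \<ge> m + n - 1) = b"
    unfolding has_mono_copy_def by auto
  have "f 0 + (m - 1 - 0) \<le> f (m - 1)"
    "f (m - 1) + (m - (m - 1)) \<le> f m"
    "f m + (m + n - 1 - m) \<le> f (m + n - 1)"
    by (rule strict_mono_on_lessThan_gap[OF mono]; use assms in simp)+
  moreover have "f (m + n - 1) < N"
    using range assms by (simp add: image_subset_iff)
  ultimately show False
    using outer inner assms by (cases b) (simp_all, linarith+)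
qed

theorem proposition4p1:
  fixes m n :: nat
  assumes "m \<ge> 2" and "n \<ge> 2"
  shows "ordered_ramsey (m + n) {(0, m + n - 1), (m - 1, m)} = 2*m + 2*n - 2"
  unfolding ordered_ramsey_def
proof (rule Least_equality)
  show "\<forall>c. has_mono_copy (m + n) (nested_edges m n) (2*m + 2*n - 2) c"
    using has_mono_copy_nested_edges_upper assms by blast
next
  fix N
  assume "\<forall>c. has_mono_copy (m + n) (nested_edges m n) N c"
  then show "2*m + 2*n - 2 \<le> N"
    using no_mono_copy_nested_edges_length_colouring[OF assms] by (meson not_le)
qed

end
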